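(* Let $f\in\mathrm{Homeo}_+(\mathbb{R})$ satisfy $f(x+1)=f(x)+2$ for all $x$ and $f(0)=0$, and let $\theta_f$ be defined on $PL_2(\mathbb{R})$ as in the context. Then for every $h\in PL_2(\mathbb{R})$, $\theta_f(h)$ is a self-homeomorphism of $\mathbb{R}$.
   Context: $\mathbb{Q}_2$ denotes the dyadic rationals. $GA(\mathbb{Q}_2)$ is the group of affine maps $x\mapsto 2^nx+r$ ($n\in\mathbb{Z}$, $r\in\mathbb{Q}_2$); $T_r(x)=x+r$, $D(x)=2x$. There is a unique injective homomorphism $\theta_f:GA(\mathbb{Q}_2)\to\mathrm{Homeo}_+(\mathbb{R})$ with $\theta_f(T_1)=T_1$, $\theta_f(D)=f$. For $r=p/2^q\in\mathbb{Q}_2$ put $\bar r=f^{-q}(p)$ (well defined, strictly increasing). $PL_2(\mathbb{R})$ is the group of homeomorphisms $h$ of $\mathbb{R}$ that are piecewise linear with a locally finite set of break points, all in $\mathbb{Q}_2$, such that near each non-break point $h$ agrees with an element of $GA(\mathbb{Q}_2)$. For $h\in PL_2(\mathbb{R})$ choose a strictly increasing sequence $(x_n)_{n\in\mathbb{Z}}$ in $\mathbb{Q}_2$ with $x_n\to\pm\infty$ as $n\to\pm\infty$ and $\gamma_n\in GA(\mathbb{Q}_2)$ with $h=\gamma_n$ on $[x_n,x_{n+1}]$, and define $\theta_f(h)(t)=\theta_f(\gamma_n)(t)$ for $t\in[\bar x_n,\bar x_{n+1})$; this is independent of the choices. *)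

theory Defs
  imports "HOL-Analysis.Analysis"
begin

definition dyadic :: "real set" where
  "dyadic = {r. \<exists>(p::int) (q::nat). r = of_int p / 2 ^ q}"

definition fpow :: "(real \<Rightarrow> real) \<Rightarrow> int \<Rightarrow> real \<Rightarrow> real" where
  "fpow f n = (if 0 \<le> n then f ^^ nat n else inv f ^^ nat (- n))"

definition dbar :: "(real \<Rightarrow> real) \<Rightarrow> real \<Rightarrow> real" where
  "dbar f r = (THE y. \<exists>(p::int) (q::nat). r = of_int p / 2 ^ q \<and> y = (inv f ^^ q) (of_int p))"

text \<open>theta_f(T_r) = f^{-q} o T_p o f^q for r = p/2^q
  (forced by theta_f(T_1)=T_1, theta_f(D)=f and T_{p/2^q} = D^{-q} T_p D^q).\<close>
definition theta_T :: "(real \<Rightarrow> real) \<Rightarrow> real \<Rightarrow> real \<Rightarrow> real" where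
  "theta_T f r = (THE g. \<exists>(p::int) (q::nat). r = of_int p / 2 ^ q \<and>
      g = (inv f ^^ q) \<circ> (\<lambda>t. t + of_int p) \<circ> (f ^^ q))"

text \<open>theta_f of the affine map x \<mapsto> 2^n x + r = T_r o D^n.\<close>
definition theta_GA :: "(real \<Rightarrow> real) \<Rightarrow> int \<Rightarrow> real \<Rightarrow> real \<Rightarrow> real" where
  "theta_GA f n r = theta_T f r \<circ> fpow f n"

definition PL2 :: "(real \<Rightarrow> real) set" where
  "PL2 = {h. (\<exists>g. homeomorphism UNIV UNIV h g) \<and>
     (\<exists>B. B \<subseteq> dyadic \<and> (\<forall>y. \<exists>e>0. finite (B \<inter> ball y e)) \<and>
        (\<forall>y. y \<notin> B \<longrightarrow> (\<exists>e>0. \<exists>(n::int) r. r \<in> dyadic \<and>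
              (\<forall>z\<in>ball y e. h z = 2 powi n * z + r))))}"

definition PL_decomp :: "(real \<Rightarrow> real) \<Rightarrow> (int \<Rightarrow> real) \<Rightarrow> (int \<Rightarrow> int) \<Rightarrow> (int \<Rightarrow> real) \<Rightarrow> bool" where
  "PL_decomp h x a b \<longleftrightarrow> strict_mono x \<and> (\<forall>k. x k \<in> dyadic) \<and>
     filterlim x at_top at_top \<and> filterlim x at_bot at_bot \<and>
     (\<forall>k. b k \<in> dyadic) \<and>
     (\<forall>k. \<forall>z\<in>{x k..x (k+1)}. h z = 2 powi (a k) * z + b k)"

text \<open>theta_f(h)(t) = theta_f(gamma_k)(t) for t in [bar x_k, bar x_{k+1});
  the paper asserts independence of the choices, so any choice is taken.\<close>
definition theta_PL :: "(real \<Rightarrow> real) \<Rightarrow> (real \<Rightarrow> real) \<Rightarrow> real \<Rightarrow> real" where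
  "theta_PL f h t = (SOME y. \<exists>x a b k. PL_decomp h x a b \<and>
      dbar f (x k) \<le> t \<and> t < dbar f (x (k+1)) \<and> y = theta_GA f (a k) (b k) t)"

end

theory Submission
  imports Defs
begin

text \<open>
  Write \<open>bar r\<close> for \<open>dbar f r\<close>. Since \<open>f (y + p) = f y + 2 p\<close> for integers \<open>p\<close>, the map
  \<open>bar\<close> is strictly increasing on the dyadic rationals, fixes the integers, and satisfies
  \<open>theta_f(\<gamma>) (bar r) = bar (\<gamma> r)\<close> for every dyadic affine map \<open>\<gamma>\<close>; moreover each
  \<open>theta_f(\<gamma>)\<close> is an increasing bijection of the line. Decompose \<open>h\<close> along a sequence
  \<open>x k \<rightarrow> \<plusminus>\<infinity>\<close> containing all break points and all integers. On \<open>[bar (x k), bar (x (k+1)))\<close>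
  the map \<open>theta_f(h)\<close> is \<open>theta_f(\<gamma> k)\<close>, which sends the end points to \<open>bar (h (x k))\<close> and
  \<open>bar (h (x (k+1)))\<close>. Hence the pieces fit together into a strictly increasing map, which is
  onto because \<open>bar (h (x k)) \<rightarrow> \<plusminus>\<infinity>\<close>; a strictly increasing surjection of the line is a
  homeomorphism.
\<close>

section \<open>Dyadic rationals\<close>

lemma dyadicI: "of_int p / 2 ^ q \<in> dyadic"
  by (auto simp: dyadic_def)

lemma dyadic_of_int: "of_int n \<in> dyadic"
  using dyadicI[of n 0] by simp

lemma dyadic_common_denominator:
  assumes "r \<in> dyadic" "s \<in> dyadic"
  obtains p p' :: int and q :: nat where "r = of_int p / 2 ^ q" "s = of_int p' / 2 ^ q"
proof -
  obtain p q p' q' where r: "r = of_int p / 2 ^ q" and s: "s = of_int p' / 2 ^ q'"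
    using assms by (auto simp: dyadic_def)
  have "r = of_int (p * 2 ^ q') / 2 ^ (q + q')" "s = of_int (p' * 2 ^ q) / 2 ^ (q + q')"
    by (simp_all add: r s power_add)
  then show ?thesis by (rule that)
qed

lemma dyadic_add: "r \<in> dyadic \<Longrightarrow> s \<in> dyadic \<Longrightarrow> r + s \<in> dyadic"
  by (erule dyadic_common_denominator, assumption)
    (auto simp: dyadic_def add_divide_distrib[symmetric] simp flip: of_int_add)

lemma dyadic_powi_mult: "s \<in> dyadic \<Longrightarrow> 2 powi n * s \<in> dyadic"
proof -
  assume "s \<in> dyadic"
  then obtain p :: int and q :: nat where s: "s = of_int p / 2 ^ q" by (auto simp: dyadic_def)
  show ?thesis
  proof (cases "0 \<le> n")
    case True
    then have "2 powi n * s = of_int (2 ^ nat n * p) / 2 ^ q"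
      by (simp add: s power_int_def)
    then show ?thesis by (metis dyadicI)
  next
    case False
    then have "2 powi n * s = of_int p / 2 ^ (q + nat (- n))"
      by (simp add: s power_int_def power_add field_simps)
    then show ?thesis by (metis dyadicI)
  qed
qed

lemma dyadic_representation_invariant:
  fixes F :: "int \<Rightarrow> nat \<Rightarrow> 'a"
  assumes F: "\<And>p q d. F (p * 2 ^ d) (q + d) = F p q"
    and eq: "(of_int p :: real) / 2 ^ q = of_int p' / 2 ^ q'"
  shows "F p q = F p' q'"
proof -
  have *: "F p q = F p' q'" if "(of_int p :: real) / 2 ^ q = of_int p' / 2 ^ q'" "q \<le> q'"
    for p q p' q'
  proof -
    have "(2::real) ^ q' = 2 ^ q * 2 ^ (q' - q)"
      using \<open>q \<le> q'\<close> by (simp flip: power_add)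
    then have "(of_int p' :: real) = of_int (p * 2 ^ (q' - q))"
      using that(1) by (simp add: field_simps)
    then have "p' = p * 2 ^ (q' - q)" by linarith
    then show ?thesis using F[of p "q' - q" q] \<open>q \<le> q'\<close> by simp
  qed
  show ?thesis using *[OF eq] *[OF eq[symmetric]] by (cases "q \<le> q'") auto
qed

section \<open>Increasing maps of the real line\<close>

lemma strict_mono_funpow:
  fixes g :: "'a::order \<Rightarrow> 'a"
  shows "strict_mono g \<Longrightarrow> strict_mono (g ^^ n)"
  by (induction n) (auto simp: strict_mono_def)

lemma strict_mono_inv:
  fixes F :: "'a::linorder \<Rightarrow> 'b::linorder"
  assumes "strict_mono F" "surj F"
  shows "strict_mono (inv F)"
  by (rule strict_monoI)
    (metis assms strict_mono_less surj_f_inv_f)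

lemma strict_mono_surj_homeomorphism:
  fixes F :: "real \<Rightarrow> real"
  assumes "strict_mono F" "surj F"
  shows "homeomorphism UNIV UNIV F (inv F)"
proof -
  have cont: "continuous_on UNIV G" if "strict_mono G" "surj G" for G :: "real \<Rightarrow> real"
    by (rule continuous_onI_mono) (use that in \<open>auto simp: strict_mono_less_eq\<close>)
  have "bij F" using assms by (simp add: bij_def strict_mono_imp_inj_on)
  then show ?thesis
    using assms cont[of F] cont[of "inv F"] strict_mono_inv[OF assms]
    by (auto simp: homeomorphism_def bij_is_surj bij_imp_bij_inv bij_is_inj surj_f_inv_f)
qed

lemma filterlim_strict_mono_surj:
  fixes F :: "real \<Rightarrow> real"
  assumes "strict_mono F" "surj F"
  shows "filterlim F at_top at_top" "filterlim F at_bot at_bot"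
proof -
  have "\<exists>z. F z = Z" for Z using assms(2) by (metis surjD)
  then show "filterlim F at_top at_top" "filterlim F at_bot at_bot"
    unfolding filterlim_at_top filterlim_at_bot
    by (metis (mono_tags) assms(1) eventually_ge_at_top eventually_mono strict_mono_less_eq,
        metis (mono_tags) assms(1) eventually_le_at_bot eventually_mono strict_mono_less_eq)
qed

lemma strict_mono_intI:
  fixes s :: "int \<Rightarrow> 'a::order"
  assumes "\<And>k. s k < s (k + 1)"
  shows "strict_mono s"
proof (rule strict_monoI)
  fix i j :: int
  assume "i < j"
  then show "s i < s j"
    by (induction j rule: int_gr_induct) (use assms less_trans in blast)+
qed

lemma strict_mono_int_bracket:
  fixes s :: "int \<Rightarrow> real"
  assumes "strict_mono s" "filterlim s at_top at_top" "filterlim s at_bot at_bot"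
  obtains j where "s j \<le> z" "z < s (j + 1)"
proof -
  obtain n where n: "s n \<le> z"
    using assms(3) unfolding filterlim_at_bot eventually_at_bot_linorder by blast
  obtain m where m: "z < s m"
    using assms(2) unfolding filterlim_at_top_dense eventually_at_top_linorder by blast
  define P where "P i \<longleftrightarrow> z < s (n + int i)" for i
  have "n < m" using n m assms(1) by (meson le_less_trans not_less strict_mono_less)
  then have "P (nat (m - n))" using m by (simp add: P_def)
  define i where "i = (LEAST i. P i)"
  have Pi: "P i" unfolding i_def by (rule LeastI) fact
  have "i \<noteq> 0" using Pi n by (metis P_def add_0_right not_le of_nat_0)
  have "\<not> P (i - 1)"
    unfolding i_def by (rule not_less_Least) (use \<open>i \<noteq> 0\<close> i_def in simp)
  moreover have "int (i - 1) = int i - 1" using \<open>i \<noteq> 0\<close> by simp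
  ultimately show ?thesis
    using Pi by (intro that[of "n + int i - 1"]) (simp_all add: P_def algebra_simps)
qed

locale piecewise_increasing =
  fixes X :: "int \<Rightarrow> real" and G :: "int \<Rightarrow> real \<Rightarrow> real" and F :: "real \<Rightarrow> real"
  assumes nodes: "strict_mono X" "filterlim X at_top at_top" "filterlim X at_bot at_bot"
    and pieces_mono: "\<And>k. strict_mono (G k)"
    and glue: "\<And>k. G k (X (k + 1)) = G (k + 1) (X (k + 1))"
    and on_piece: "\<And>k t. X k \<le> t \<Longrightarrow> t < X (k + 1) \<Longrightarrow> F t = G k t"
begin

lemma strict_mono_values_at_nodes: "strict_mono (\<lambda>k. G k (X k))"
proof (rule strict_mono_intI)
  fix k
  have "X k < X (k + 1)" using nodes(1) by (simp add: strict_mono_less)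
  then have "G k (X k) < G k (X (k + 1))"
    using pieces_mono[of k] by (simp add: strict_mono_less)
  then show "G k (X k) < G (k + 1) (X (k + 1))" by (simp only: glue)
qed

lemma strict_mono: "strict_mono F"
proof (rule strict_monoI)
  fix t t' :: real
  assume "t < t'"
  obtain k where k: "X k \<le> t" "t < X (k + 1)" using strict_mono_int_bracket[OF nodes] .
  obtain k' where k': "X k' \<le> t'" "t' < X (k' + 1)" using strict_mono_int_bracket[OF nodes] .
  have "X k < X (k' + 1)" using k(1) k'(2) \<open>t < t'\<close> by linarith
  then have "k \<le> k'" using nodes(1) by (simp add: strict_mono_less)
  show "F t < F t'"
  proof (cases "k = k'")
    case True
    then show ?thesis
      using on_piece[OF k] on_piece[OF k'] \<open>t < t'\<close> pieces_mono by (simp add: strict_mono_less)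
  next
    case False
    then have "k + 1 \<le> k'" using \<open>k \<le> k'\<close> by simp
    have "F t = G k t" using k by (rule on_piece)
    also have "\<dots> < G k (X (k + 1))" using k pieces_mono by (simp add: strict_mono_less)
    also have "\<dots> = G (k + 1) (X (k + 1))" by (rule glue)
    also have "\<dots> \<le> G k' (X k')"
      using strict_mono_less_eq[OF strict_mono_values_at_nodes, of "k + 1" k'] \<open>k + 1 \<le> k'\<close>
      by simp
    also have "\<dots> \<le> G k' t'" using k' pieces_mono by (simp add: strict_mono_less_eq)
    also have "\<dots> = F t'" using k' by (simp add: on_piece)
    finally show ?thesis .
  qed
qed

lemma homeomorphism:
  assumes "\<And>k. surj (G k)"
    and "filterlim (\<lambda>k. G k (X k)) at_top at_top" "filterlim (\<lambda>k. G k (X k)) at_bot at_bot"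
  shows "homeomorphism UNIV UNIV F (inv F)"
proof (rule strict_mono_surj_homeomorphism[OF strict_mono])
  have "y \<in> range F" for y
  proof -
    obtain k where k: "G k (X k) \<le> y" "y < G (k + 1) (X (k + 1))"
      using strict_mono_int_bracket[OF strict_mono_values_at_nodes assms(2,3)] .
    obtain t where t: "G k t = y" using assms(1) by (metis surjD)
    have "G k (X k) \<le> G k t" "G k t < G k (X (k + 1))"
      using k t glue[of k] by simp_all
    then have "X k \<le> t" "t < X (k + 1)"
      using pieces_mono[of k] by (simp_all add: strict_mono_less strict_mono_less_eq)
    then show ?thesis using t on_piece by (metis rangeI)
  qed
  then show "surj F" by blast
qed

end

section \<open>Locally finite sets of reals\<close>

lemma finite_Int_atLeastAtMost_if_locally_finite:
  fixes B :: "real set"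
  assumes "\<forall>y. \<exists>e>0. finite (B \<inter> ball y e)"
  shows "finite (B \<inter> {u..v})"
  using finite_not_islimpt_in_compact[of "{u..v}" B] assms
  by (auto simp: islimpt_eq_infinite_ball Int_commute)

lemma finite_Ints_Int_atLeastAtMost: "finite (\<int> \<inter> {u..v :: real})"
proof (rule finite_subset)
  show "\<int> \<inter> {u..v} \<subseteq> real_of_int ` {\<lfloor>u\<rfloor>..\<lceil>v\<rceil>}"
    by (auto elim!: Ints_cases simp: floor_le_iff le_ceiling_iff)
qed simp

lemma filterlim_strict_mono_in_locally_finite:
  fixes x :: "int \<Rightarrow> real"
  assumes x: "strict_mono x" "range x \<subseteq> S" and fin: "\<And>u v. finite (S \<inter> {u..v})"
  shows "filterlim x at_top at_top" "filterlim x at_bot at_bot"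
proof -
  have inj: "inj_on x A" for A using x(1) by (rule strict_mono_imp_inj_on)
  have "\<exists>k. Z \<le> x k" for Z
  proof (rule ccontr)
    assume "\<nexists>k. Z \<le> x k"
    then have "x k \<le> Z" for k by (simp add: not_le less_imp_le)
    then have "x ` {0..} \<subseteq> S \<inter> {x 0..Z}" using x by (auto simp: strict_mono_less_eq)
    then have "finite (x ` {0..})" using fin by (rule finite_subset)
    then show False using finite_imageD[OF _ inj] infinite_Ici by blast
  qed
  then show "filterlim x at_top at_top"
    unfolding filterlim_at_top eventually_at_top_linorder
    by (meson x(1) order_trans strict_mono_less_eq)
  have "\<exists>k. x k \<le> Z" for Z
  proof (rule ccontr)
    assume "\<nexists>k. x k \<le> Z"
    then have "Z \<le> x k" for k by (simp add: not_le less_imp_le)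
    then have "x ` {..0} \<subseteq> S \<inter> {Z..x 0}" using x by (auto simp: strict_mono_less_eq)
    then have "finite (x ` {..0})" using fin by (rule finite_subset)
    then show False using finite_imageD[OF _ inj] infinite_Iic by blast
  qed
  then show "filterlim x at_bot at_bot"
    unfolding filterlim_at_bot eventually_at_bot_linorder
    by (meson x(1) order_trans strict_mono_less_eq)
qed

lemma locally_finite_successor:
  fixes S :: "real set"
  assumes fin: "\<And>u v. finite (S \<inter> {u..v})" and "s \<in> S" "y < s"
  shows "\<exists>n. n \<in> S \<and> y < n \<and> (\<forall>t\<in>S. y < t \<longrightarrow> n \<le> t)"
proof -
  define n where "n = Min (S \<inter> {y<..s})"
  have fin': "finite (S \<inter> {y<..s})" using fin[of y s] by (rule finite_subset[rotated]) auto
  have "s \<in> S \<inter> {y<..s}" using assms by simp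
  then have n: "n \<in> S \<inter> {y<..s}" unfolding n_def using fin' by (metis Min_in empty_iff)
  have min: "n \<le> t" if "t \<in> S \<inter> {y<..s}" for t
    unfolding n_def using fin' that by (rule Min_le)
  have "n \<le> t" if "t \<in> S" "y < t" for t
    using min[of t] n that by (cases "t \<le> s") auto
  then show ?thesis using n by (intro exI[of _ n]) auto
qed

lemma locally_finite_predecessor:
  fixes S :: "real set"
  assumes fin: "\<And>u v. finite (S \<inter> {u..v})" and "s \<in> S" "s < y"
  shows "\<exists>p. p \<in> S \<and> p < y \<and> (\<forall>t\<in>S. t < y \<longrightarrow> t \<le> p)"
proof -
  define p where "p = Max (S \<inter> {s..<y})"
  have fin': "finite (S \<inter> {s..<y})" using fin[of s y] by (rule finite_subset[rotated]) auto
  have "s \<in> S \<inter> {s..<y}" using assms by simp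
  then have p: "p \<in> S \<inter> {s..<y}" unfolding p_def using fin' by (metis Max_in empty_iff)
  have max: "t \<le> p" if "t \<in> S \<inter> {s..<y}" for t
    unfolding p_def using fin' that by (rule Max_ge)
  have "t \<le> p" if "t \<in> S" "t < y" for t
    using max[of t] p that by (cases "s \<le> t") auto
  then show ?thesis using p by (intro exI[of _ p]) auto
qed

lemma locally_finite_enumeration:
  fixes S :: "real set"
  assumes fin: "\<And>u v. finite (S \<inter> {u..v})" and ints: "\<int> \<subseteq> S"
  obtains x :: "int \<Rightarrow> real" where "strict_mono x" "range x \<subseteq> S"
    "\<And>k s. s \<in> S \<Longrightarrow> x k < s \<Longrightarrow> x (k + 1) \<le> s"
    "filterlim x at_top at_top" "filterlim x at_bot at_bot"
proof -
  have "\<forall>y. \<exists>n. n \<in> S \<and> y < n \<and> (\<forall>t\<in>S. y < t \<longrightarrow> n \<le> t)"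
  proof
    fix y :: real
    have "of_int (\<lfloor>y\<rfloor> + 1) \<in> S" using ints Ints_of_int by blast
    then show "\<exists>n. n \<in> S \<and> y < n \<and> (\<forall>t\<in>S. y < t \<longrightarrow> n \<le> t)"
      by (rule locally_finite_successor[OF fin]) (use floor_correct[of y] in simp)
  qed
  then obtain nxt where nxt: "\<And>y. nxt y \<in> S \<and> y < nxt y \<and> (\<forall>t\<in>S. y < t \<longrightarrow> nxt y \<le> t)"
    by metis
  have "\<forall>y. \<exists>p. p \<in> S \<and> p < y \<and> (\<forall>t\<in>S. t < y \<longrightarrow> t \<le> p)"
  proof
    fix y :: real
    have "of_int (\<lceil>y\<rceil> - 1) \<in> S" using ints Ints_of_int by blast
    then show "\<exists>p. p \<in> S \<and> p < y \<and> (\<forall>t\<in>S. t < y \<longrightarrow> t \<le> p)"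
      by (rule locally_finite_predecessor[OF fin]) (use ceiling_correct[of y] in simp)
  qed
  then obtain prv where prv: "\<And>y. prv y \<in> S \<and> prv y < y \<and> (\<forall>t\<in>S. t < y \<longrightarrow> t \<le> prv y)"
    by metis
  define x where "x k = (if 0 \<le> k then (nxt ^^ nat k) 0 else (prv ^^ nat (- k)) 0)" for k
  have step: "x (k + 1) = nxt (x k) \<or> x k = prv (x (k + 1))" for k
  proof (cases "0 \<le> k")
    case True
    then show ?thesis by (simp add: x_def nat_add_distrib)
  next
    case False
    then have "nat (- k) = Suc (nat (- (k + 1)))" by simp
    then show ?thesis using False by (simp add: x_def)
  qed
  have gap: "x k < x (k + 1) \<and> (\<forall>s\<in>S. x k < s \<longrightarrow> x (k + 1) \<le> s)" for k
    using step[of k] nxt[of "x k"] prv[of "x (k + 1)"] by (metis not_le)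
  have "0 \<in> S" using ints by auto
  then have "(nxt ^^ n) 0 \<in> S" "(prv ^^ n) 0 \<in> S" for n
    by (induction n) (simp_all add: nxt prv)
  then have "range x \<subseteq> S" by (auto simp: x_def)
  moreover have "strict_mono x" using gap by (intro strict_mono_intI) blast
  ultimately show ?thesis
    using that gap filterlim_strict_mono_in_locally_finite[OF _ _ fin] by blast
qed

section \<open>Piecewise dyadic affine maps\<close>

lemma powi_affine_eq_two_points:
  fixes z w r r' :: real
  assumes "2 powi n * z + r = 2 powi n' * z + r'" "2 powi n * w + r = 2 powi n' * w + r'"
    and "z \<noteq> w"
  shows "n = n' \<and> r = r'"
proof -
  have "(2 powi n - 2 powi n') * (z - w) = (0::real)"
    using assms(1,2) by (simp add: algebra_simps)
  then have "(2::real) powi n = 2 powi n'" using assms(3) by simp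
  then have "n = n'"
    by (metis linorder_neqE power_int_strict_increasing less_irrefl one_less_numeral_iff semiring_norm(76))
  then show ?thesis using assms(1) by simp
qed

lemma powi_affine_eq_on_open:
  fixes U :: "real set"
  assumes "open U" "U \<noteq> {}" "\<And>z. z \<in> U \<Longrightarrow> 2 powi n * z + r = 2 powi n' * z + r'"
  shows "n = n' \<and> r = r'"
proof -
  obtain z e where "z \<in> U" "e > 0" "ball z e \<subseteq> U"
    using assms(1,2) by (meson ex_in_conv open_contains_ball)
  then have "z + e / 2 \<in> U" by (auto simp: dist_real_def subset_iff)
  then show ?thesis
    using powi_affine_eq_two_points assms(3) \<open>z \<in> U\<close> \<open>e > 0\<close> by (metis add_cancel_left_right half_gt_zero less_irrefl)
qed

lemma affine_on_interval_if_locally_affine: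
  fixes h :: "real \<Rightarrow> real"
  assumes cont: "continuous_on UNIV h" and "c < d"
    and loc: "\<And>y. c < y \<Longrightarrow> y < d \<Longrightarrow>
      \<exists>e>0. \<exists>n r. r \<in> dyadic \<and> (\<forall>z\<in>ball y e. h z = 2 powi n * z + r)"
  shows "\<exists>n r. r \<in> dyadic \<and> (\<forall>z\<in>{c..d}. h z = 2 powi n * z + r)"
proof -
  define A where "A = {c<..<d}"
  define affine_near where "affine_near y p \<longleftrightarrow> snd p \<in> dyadic \<and>
      (\<exists>e>0. \<forall>z\<in>ball y e. h z = 2 powi fst p * z + snd p)" for y and p :: "int \<times> real"
  define P where "P y = (SOME p. affine_near y p)" for y
  have P: "affine_near y (P y)" if y: "y \<in> A" for y
  proof -
    obtain e n r where "e > 0" "r \<in> dyadic" "\<forall>z\<in>ball y e. h z = 2 powi n * z + r"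
      using loc[of y] y by (auto simp: A_def)
    then have "affine_near y (n, r)" by (auto simp: affine_near_def)
    then show ?thesis unfolding P_def by (rule someI)
  qed
  have "connected A" and mid: "(c + d) / 2 \<in> A" using \<open>c < d\<close> by (simp_all add: A_def)
  have loc_const: "\<forall>a\<in>A. eventually (\<lambda>b. P a = P b) (at a within A)"
  proof
    fix a assume "a \<in> A"
    obtain e where "e > 0" and e: "\<forall>z\<in>ball a e. h z = 2 powi fst (P a) * z + snd (P a)"
      using P[OF \<open>a \<in> A\<close>] by (auto simp: affine_near_def)
    have "P a = P b" if "b \<in> A" "b \<in> ball a e" for b
    proof -
      obtain e' where "e' > 0" and e': "\<forall>z\<in>ball b e'. h z = 2 powi fst (P b) * z + snd (P b)"
        using P[OF \<open>b \<in> A\<close>] by (auto simp: affine_near_def)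
      have "b \<in> ball a e \<inter> ball b e'" using that \<open>e' > 0\<close> by simp
      then have "fst (P a) = fst (P b) \<and> snd (P a) = snd (P b)"
        by (intro powi_affine_eq_on_open[of "ball a e \<inter> ball b e'"]) (use e e' in force)+
      then show ?thesis by (simp add: prod_eq_iff)
    qed
    then show "eventually (\<lambda>b. P a = P b) (at a within A)"
      unfolding eventually_at using \<open>e > 0\<close> by (metis dist_commute mem_ball)
  qed
  have const: "P y = P ((c + d) / 2)" if "y \<in> A" for y
    using connected_local_const[OF \<open>connected A\<close> that mid loc_const] .
  define n r where "n = fst (P ((c + d) / 2))" and "r = snd (P ((c + d) / 2))"
  have "r \<in> dyadic" using P[OF mid] by (simp add: r_def affine_near_def)
  have "A \<subseteq> {z. h z = 2 powi n * z + r}"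
    using P const by (force simp: affine_near_def n_def r_def)
  moreover have "closed {z. h z = 2 powi n * z + r}"
    by (intro closed_Collect_eq cont continuous_intros)
  ultimately have "closure A \<subseteq> {z. h z = 2 powi n * z + r}" by (rule closure_minimal)
  then show ?thesis using \<open>r \<in> dyadic\<close> \<open>c < d\<close> by (auto simp: A_def)
qed

lemma PL2_decomposition_exists:
  assumes "h \<in> PL2"
  obtains x a b where "PL_decomp h x a b"
proof -
  obtain g where "homeomorphism UNIV UNIV h g" using assms by (auto simp: PL2_def)
  then have cont: "continuous_on UNIV h" by (simp add: homeomorphism_def)
  obtain B where "B \<subseteq> dyadic" and lf: "\<forall>y. \<exists>e>0. finite (B \<inter> ball y e)"
    and loc: "\<And>y. y \<notin> B \<Longrightarrow>
      \<exists>e>0. \<exists>n r. r \<in> dyadic \<and> (\<forall>z\<in>ball y e. h z = 2 powi n * z + r)"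
    using assms by (auto simp: PL2_def)
  define S where "S = B \<union> \<int>"
  have fin: "finite (S \<inter> {u..v})" for u v
    using finite_Int_atLeastAtMost_if_locally_finite[OF lf] finite_Ints_Int_atLeastAtMost
    by (simp add: S_def Int_Un_distrib2)
  have "\<int> \<subseteq> S" by (simp add: S_def)
  then obtain x :: "int \<Rightarrow> real" where x: "strict_mono x" "range x \<subseteq> S"
    and gap: "\<And>k s. s \<in> S \<Longrightarrow> x k < s \<Longrightarrow> x (k + 1) \<le> s"
    and lim: "filterlim x at_top at_top" "filterlim x at_bot at_bot"
    using locally_finite_enumeration[OF fin] by blast
  have "\<exists>n r. r \<in> dyadic \<and> (\<forall>z\<in>{x k..x (k + 1)}. h z = 2 powi n * z + r)" for k
  proof (rule affine_on_interval_if_locally_affine[OF cont])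
    show "x k < x (k + 1)" using x(1) by (simp add: strict_mono_less)
    fix y assume "x k < y" "y < x (k + 1)"
    then have "y \<notin> B" using gap[of y k] by (auto simp: S_def)
    then show "\<exists>e>0. \<exists>n r. r \<in> dyadic \<and> (\<forall>z\<in>ball y e. h z = 2 powi n * z + r)" by (rule loc)
  qed
  then obtain a b where "\<And>k. b k \<in> dyadic \<and> (\<forall>z\<in>{x k..x (k + 1)}. h z = 2 powi a k * z + b k)"
    by metis
  moreover have "x k \<in> dyadic" for k
  proof -
    have "x k \<in> B \<union> \<int>" using x(2) by (auto simp: S_def)
    then show ?thesis using \<open>B \<subseteq> dyadic\<close> dyadic_of_int by (auto elim: Ints_cases)
  qed
  ultimately show ?thesis using x(1) lim by (intro that[of x a b]) (simp add: PL_decomp_def)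
qed

lemma PL_decomp_strict_mono:
  assumes "PL_decomp h x a b"
  shows "strict_mono h"
proof -
  have pieces: "\<And>k z. x k \<le> z \<Longrightarrow> z \<le> x (k + 1) \<Longrightarrow> h z = 2 powi a k * z + b k"
    using assms by (simp add: PL_decomp_def)
  interpret piecewise_increasing x "\<lambda>k z. 2 powi a k * z + b k" h
  proof
    show "strict_mono x" "filterlim x at_top at_top" "filterlim x at_bot at_bot"
      using assms by (simp_all add: PL_decomp_def)
    then have "x k \<le> x (k + 1)" "x (k + 1) \<le> x (k + 1 + 1)" for k
      by (simp_all add: strict_mono_less_eq)
    then show "2 powi a k * x (k + 1) + b k = 2 powi a (k + 1) * x (k + 1) + b (k + 1)" for k
      using pieces[of k "x (k + 1)"] pieces[of "k + 1" "x (k + 1)"] by (metis order_refl)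
  qed (auto intro!: strict_monoI simp: pieces)
  show ?thesis by (rule strict_mono)
qed

lemma PL_decomp_pieces_agree:
  assumes "PL_decomp h x a b" "PL_decomp h x' a' b'"
    and "max (x k) (x' k') < min (x (k + 1)) (x' (k' + 1))"
  shows "a k = a' k' \<and> b k = b' k'"
proof (rule powi_affine_eq_on_open)
  show "open {max (x k) (x' k')<..<min (x (k + 1)) (x' (k' + 1))}" by simp
  show "{max (x k) (x' k')<..<min (x (k + 1)) (x' (k' + 1))} \<noteq> {}"
    by (metis assms(3) greaterThanLessThan_empty_iff not_le)
  fix z assume "z \<in> {max (x k) (x' k')<..<min (x (k + 1)) (x' (k' + 1))}"
  then have "z \<in> {x k..x (k + 1)}" "z \<in> {x' k'..x' (k' + 1)}" by auto
  then have "h z = 2 powi a k * z + b k" "h z = 2 powi a' k' * z + b' k'"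
    using assms(1,2) unfolding PL_decomp_def by blast+
  then show "2 powi a k * z + b k = 2 powi a' k' * z + b' k'" by simp
qed

lemma PL_decomp_filterlim_nodes_image:
  assumes "PL_decomp h x a b" "h \<in> PL2"
  shows "filterlim (\<lambda>k. h (x k)) at_top at_top" "filterlim (\<lambda>k. h (x k)) at_bot at_bot"
proof -
  have "strict_mono h" using assms(1) by (rule PL_decomp_strict_mono)
  moreover have "surj h" using assms(2) by (auto simp: PL2_def homeomorphism_def)
  ultimately show "filterlim (\<lambda>k. h (x k)) at_top at_top" "filterlim (\<lambda>k. h (x k)) at_bot at_bot"
    using assms(1) filterlim_strict_mono_surj filterlim_compose unfolding PL_decomp_def by blast+
qed

section \<open>The homomorphism \<open>theta_f\<close>\<close>

locale doubling_lift =
  fixes f :: "real \<Rightarrow> real"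
  assumes homeomorphism_f: "\<exists>g. homeomorphism UNIV UNIV f g"
    and strict_mono_f: "strict_mono f"
    and f_add_1: "\<And>x. f (x + 1) = f x + 2"
    and f_0: "f 0 = 0"
begin

lemma bij_f: "bij f"
  using homeomorphism_f strict_mono_f
  by (auto simp: bij_def homeomorphism_def strict_mono_imp_inj_on)

lemma funpow_inv_funpow: "(f ^^ n) ((inv f ^^ n) y) = y"
  by (metis comp_apply fn_o_inv_fn_is_id[OF bij_f])

lemma inv_funpow_funpow: "(inv f ^^ n) ((f ^^ n) y) = y"
  by (metis comp_apply inv_fn_o_fn_is_id[OF bij_f])

lemma f_add_of_int: "f (x + of_int m) = f x + 2 * of_int m"
proof (induction m rule: int_induct[of _ 0])
  case (step1 i)
  then show ?case using f_add_1[of "x + of_int i"] by (simp add: add.assoc)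
next
  case (step2 i)
  then show ?case using f_add_1[of "x + of_int (i - 1)"] by (simp add: algebra_simps)
qed simp

lemma funpow_add_of_int: "(f ^^ d) (y + of_int p) = (f ^^ d) y + of_int p * 2 ^ d"
proof (induction d)
  case (Suc d)
  then show ?case using f_add_of_int[of "(f ^^ d) y" "p * 2 ^ d"] by simp
qed simp

lemma inv_funpow_add_of_int: "(inv f ^^ d) ((f ^^ d) y + of_int p * 2 ^ d) = y + of_int p"
  by (metis funpow_add_of_int inv_funpow_funpow)

lemma inv_funpow_of_int: "(inv f ^^ d) (of_int p * 2 ^ d) = of_int p"
proof -
  have "(f ^^ d) 0 = 0" by (induction d) (simp_all add: f_0)
  then show ?thesis using inv_funpow_add_of_int[of d 0 p] by simp
qed

lemma dbar_eq: "dbar f (of_int p / 2 ^ q) = (inv f ^^ q) (of_int p)"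
proof -
  have invariant: "(inv f ^^ (q + d)) (of_int (p * 2 ^ d)) = (inv f ^^ q) (of_int p)" for p q d
    by (simp add: funpow_add inv_funpow_of_int)
  show ?thesis
    unfolding dbar_def
    by (rule the_equality)
      (auto dest: dyadic_representation_invariant[where F = "\<lambda>p q. (inv f ^^ q) (of_int p)",
          OF invariant])
qed

lemma theta_T_eq: "theta_T f (of_int p / 2 ^ q) = (inv f ^^ q) \<circ> (\<lambda>t. t + of_int p) \<circ> (f ^^ q)"
proof -
  have invariant: "(inv f ^^ (q + d)) \<circ> (\<lambda>t. t + of_int (p * 2 ^ d)) \<circ> (f ^^ (q + d))
      = (inv f ^^ q) \<circ> (\<lambda>t. t + of_int p) \<circ> (f ^^ q)" for p q d
  proof -
    have "inv f ^^ (q + d) = inv f ^^ q \<circ> inv f ^^ d" by (rule funpow_add)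
    moreover have "f ^^ (q + d) = f ^^ d \<circ> f ^^ q" by (simp only: add.commute[of q] funpow_add)
    ultimately show ?thesis by (simp add: comp_def inv_funpow_add_of_int)
  qed
  show ?thesis
    unfolding theta_T_def
    by (rule the_equality)
      (auto dest: dyadic_representation_invariant[where
          F = "\<lambda>p q. (inv f ^^ q) \<circ> (\<lambda>t. t + of_int p) \<circ> (f ^^ q)", OF invariant])
qed

lemma dbar_of_int: "dbar f (of_int n) = of_int n"
  using dbar_eq[of n 0] by simp

lemma strict_mono_on_dbar: "strict_mono_on dyadic (dbar f)"
proof (rule strict_mono_onI)
  fix r s assume "r \<in> dyadic" "s \<in> dyadic" "r < s"
  obtain p p' q where r: "r = of_int p / 2 ^ q" and s: "s = of_int p' / 2 ^ q"
    using \<open>r \<in> dyadic\<close> \<open>s \<in> dyadic\<close> by (rule dyadic_common_denominator)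
  then have "p < p'" using \<open>r < s\<close> by (simp add: divide_less_cancel)
  moreover have "strict_mono (inv f ^^ q)"
    using strict_mono_funpow strict_mono_inv[OF strict_mono_f] bij_f by (simp add: bij_is_surj)
  ultimately show "dbar f r < dbar f s" by (simp add: r s dbar_eq strict_mono_less)
qed

lemma fpow_dbar:
  assumes "s \<in> dyadic"
  shows "fpow f n (dbar f s) = dbar f (2 powi n * s)"
proof -
  obtain p :: int and q :: nat where s: "s = of_int p / 2 ^ q"
    using assms by (auto simp: dyadic_def)
  show ?thesis
  proof (cases "0 \<le> n")
    case True
    define N where "N = nat n"
    have "s = of_int (p * 2 ^ N) / 2 ^ (N + q)" by (simp add: s power_add)
    then have "dbar f s = (inv f ^^ N) ((inv f ^^ q) (of_int (p * 2 ^ N)))"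
      by (simp only: dbar_eq funpow_add comp_apply)
    moreover have "2 powi n * s = of_int (p * 2 ^ N) / 2 ^ q"
      using True by (simp add: s N_def power_int_def)
    ultimately show ?thesis
      using True dbar_eq[of "p * 2 ^ N" q] by (simp add: fpow_def N_def funpow_inv_funpow)
  next
    case False
    define N where "N = nat (- n)"
    have "fpow f n (dbar f s) = (inv f ^^ N) ((inv f ^^ q) (of_int p))"
      using False by (simp add: fpow_def N_def s dbar_eq)
    also have "\<dots> = dbar f (of_int p / 2 ^ (N + q))"
      by (simp only: dbar_eq funpow_add comp_apply)
    also have "of_int p / 2 ^ (N + q) = 2 powi n * s"
      using False by (simp add: s N_def power_int_def power_add field_simps)
    finally show ?thesis .
  qed
qed

lemma theta_T_dbar:
  assumes "r \<in> dyadic" "u \<in> dyadic"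
  shows "theta_T f r (dbar f u) = dbar f (u + r)"
proof -
  obtain p P q where r: "r = of_int p / 2 ^ q" and u: "u = of_int P / 2 ^ q"
    using assms by (rule dyadic_common_denominator)
  have "theta_T f r (dbar f u) = (inv f ^^ q) (of_int (P + p))"
    by (simp add: r u theta_T_eq dbar_eq funpow_inv_funpow)
  also have "\<dots> = dbar f (u + r)"
    using dbar_eq[of "P + p" q] by (simp add: r u add_divide_distrib)
  finally show ?thesis .
qed

lemma theta_GA_dbar:
  assumes "r \<in> dyadic" "s \<in> dyadic"
  shows "theta_GA f n r (dbar f s) = dbar f (2 powi n * s + r)"
  using assms by (simp add: theta_GA_def fpow_dbar theta_T_dbar dyadic_powi_mult)

lemma strict_mono_surj_theta_GA:
  assumes "r \<in> dyadic"
  shows "strict_mono (theta_GA f n r)" "surj (theta_GA f n r)"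
proof -
  obtain p :: int and q :: nat where r: "r = of_int p / 2 ^ q"
    using assms by (auto simp: dyadic_def)
  have "strict_mono (inv f)" "surj (inv f)"
    using strict_mono_inv[OF strict_mono_f] bij_f by (simp_all add: bij_is_surj bij_imp_bij_inv)
  then have powers: "strict_mono (f ^^ m)" "surj (f ^^ m)"
    "strict_mono (inv f ^^ m)" "surj (inv f ^^ m)" for m
    using strict_mono_f bij_f by (simp_all add: strict_mono_funpow bij_is_surj)
  have shift: "strict_mono (\<lambda>t. t + of_int p :: real)" "surj (\<lambda>t. t + of_int p :: real)"
    by (auto intro: strict_monoI)
  have "strict_mono (theta_T f r)" unfolding r theta_T_eq by (intro strict_mono_o powers shift)
  moreover have "surj (theta_T f r)" unfolding r theta_T_eq by (intro comp_surj powers shift)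
  moreover have "strict_mono (fpow f n)" "surj (fpow f n)"
    by (simp_all add: fpow_def powers)
  ultimately show "strict_mono (theta_GA f n r)" "surj (theta_GA f n r)"
    unfolding theta_GA_def by (simp_all only: strict_mono_o comp_surj)
qed

lemma filterlim_dbar:
  assumes "\<And>k. s k \<in> dyadic"
  shows "filterlim s at_top at_top \<Longrightarrow> filterlim (\<lambda>k. dbar f (s k)) at_top at_top"
    and "filterlim s at_bot at_bot \<Longrightarrow> filterlim (\<lambda>k. dbar f (s k)) at_bot at_bot"
proof -
  have le: "dbar f u \<le> dbar f v" if "u \<le> v" "u \<in> dyadic" "v \<in> dyadic" for u v
    using that strict_mono_on_dbar by (simp add: strict_mono_on_less_eq)
  show "filterlim s at_top at_top \<Longrightarrow> filterlim (\<lambda>k. dbar f (s k)) at_top at_top"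
    unfolding filterlim_at_top
  proof (intro allI, elim allE)
    fix Z :: real
    assume "\<forall>\<^sub>F k in at_top. of_int \<lceil>Z\<rceil> \<le> s k"
    then show "\<forall>\<^sub>F k in at_top. Z \<le> dbar f (s k)"
      by (rule eventually_mono)
        (metis le assms dyadic_of_int dbar_of_int le_of_int_ceiling order_trans)
  qed
  show "filterlim s at_bot at_bot \<Longrightarrow> filterlim (\<lambda>k. dbar f (s k)) at_bot at_bot"
    unfolding filterlim_at_bot
  proof (intro allI, elim allE)
    fix Z :: real
    assume "\<forall>\<^sub>F k in at_bot. s k \<le> of_int \<lfloor>Z\<rfloor>"
    then show "\<forall>\<^sub>F k in at_bot. dbar f (s k) \<le> Z"
      by (rule eventually_mono)
        (metis le assms dyadic_of_int dbar_of_int of_int_floor_le order_trans)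
  qed
qed

lemma theta_GA_dbar_on_piece:
  assumes "PL_decomp h x a b" "x k \<le> z" "z \<le> x (k + 1)" "z \<in> dyadic"
  shows "theta_GA f (a k) (b k) (dbar f z) = dbar f (h z)" "h z \<in> dyadic"
  using assms by (simp_all add: PL_decomp_def theta_GA_dbar dyadic_add dyadic_powi_mult)

lemma theta_PL_eq_theta_GA:
  assumes D: "PL_decomp h x a b" and t: "dbar f (x k) \<le> t" "t < dbar f (x (k + 1))"
  shows "theta_PL f h t = theta_GA f (a k) (b k) t"
proof -
  have "\<exists>y x a b k. PL_decomp h x a b \<and> dbar f (x k) \<le> t \<and> t < dbar f (x (k + 1)) \<and>
      y = theta_GA f (a k) (b k) t"
    using D t by blast
  then have "\<exists>x a b k. PL_decomp h x a b \<and> dbar f (x k) \<le> t \<and> t < dbar f (x (k + 1)) \<and>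
      theta_PL f h t = theta_GA f (a k) (b k) t"
    unfolding theta_PL_def by (rule someI_ex)
  \<comment> \<open>The decomposition chosen by \<open>theta_PL\<close> may differ from ours, but its piece around
    \<open>t\<close> overlaps ours in a nondegenerate interval, where both carry the same affine map.\<close>
  then obtain x' a' b' k' where D': "PL_decomp h x' a' b'"
    and t': "dbar f (x' k') \<le> t" "t < dbar f (x' (k' + 1))"
    and val: "theta_PL f h t = theta_GA f (a' k') (b' k') t"
    by blast
  define u w where "u = max (x k) (x' k')" and "w = min (x (k + 1)) (x' (k' + 1))"
  have "u \<in> dyadic" "w \<in> dyadic"
    using D D' by (simp_all add: u_def w_def max_def min_def PL_decomp_def)
  moreover have "dbar f u < dbar f w"
    using t t' by (simp add: u_def w_def max_def min_def)
  ultimately have "u < w" using strict_mono_on_less[OF strict_mono_on_dbar] by blast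
  then have "a k = a' k' \<and> b k = b' k'"
    using PL_decomp_pieces_agree[OF D D'] by (simp add: u_def w_def)
  then show ?thesis using val by simp
qed

theorem homeomorphism_theta_PL:
  assumes "h \<in> PL2"
  shows "\<exists>g. homeomorphism UNIV UNIV (theta_PL f h) g"
proof -
  obtain x a b where D: "PL_decomp h x a b" using assms by (rule PL2_decomposition_exists)
  then have x: "strict_mono x" "filterlim x at_top at_top" "filterlim x at_bot at_bot"
    and dyadic: "\<And>k. x k \<in> dyadic" "\<And>k. b k \<in> dyadic"
    by (simp_all add: PL_decomp_def)
  define X where "X k = dbar f (x k)" for k
  define G where "G k = theta_GA f (a k) (b k)" for k
  have "x k \<le> x (k + 1)" for k using x(1) by (simp add: strict_mono_less_eq)
  then have G_nodes: "G k (X k) = dbar f (h (x k))" "G k (X (k + 1)) = dbar f (h (x (k + 1)))"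
    and "h (x k) \<in> dyadic" for k
    using theta_GA_dbar_on_piece[OF D, of k "x k"] theta_GA_dbar_on_piece[OF D, of k "x (k + 1)"]
      dyadic(1) by (simp_all add: G_def X_def)
  then have G_nodes_lim: "filterlim (\<lambda>k. G k (X k)) at_top at_top"
      "filterlim (\<lambda>k. G k (X k)) at_bot at_bot"
    unfolding G_nodes using PL_decomp_filterlim_nodes_image[OF D assms]
    by (simp_all add: filterlim_dbar[of "\<lambda>k. h (x k)"])
  interpret piecewise_increasing X G "theta_PL f h"
  proof
    show "strict_mono X"
      using x(1) strict_mono_on_dbar dyadic(1) by (simp add: X_def strict_mono_def strict_mono_on_def)
    show "filterlim X at_top at_top" "filterlim X at_bot at_bot"
      unfolding X_def using filterlim_dbar dyadic(1) x(2,3) by blast+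
    show "strict_mono (G k)" for k by (simp add: G_def strict_mono_surj_theta_GA dyadic)
    show "G k (X (k + 1)) = G (k + 1) (X (k + 1))" for k
      using G_nodes(2)[of k] G_nodes(1)[of "k + 1"] by simp
    show "theta_PL f h t = G k t" if "X k \<le> t" "t < X (k + 1)" for k t
      using that by (simp add: G_def X_def theta_PL_eq_theta_GA[OF D])
  qed
  show ?thesis
    using homeomorphism G_nodes_lim strict_mono_surj_theta_GA dyadic(2) by (auto simp: G_def)
qed

end

theorem mainTheorem5:
  fixes f :: "real \<Rightarrow> real"
  assumes "\<exists>g. homeomorphism UNIV UNIV f g"
    and "strict_mono f"
    and "\<And>x. f (x + 1) = f x + 2"
    and "f 0 = 0"
    and "h \<in> PL2"
  shows "\<exists>g. homeomorphism UNIV UNIV (theta_PL f h) g"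
proof -
  interpret doubling_lift f using assms(1-4) by unfold_locales
  show ?thesis using assms(5) by (rule homeomorphism_theta_PL)
qed

end
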